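(* Let $\Lambda=E_8(-1)^{\oplus 2}\oplus H^{\oplus 3}$ be the K3 lattice, with bilinear form $(\ ,\ )$ extended $\mathbb{C}$-bilinearly to $\Lambda_{\mathbb{C}}=\Lambda\otimes\mathbb{C}$. Let $\varphi_{14}(x)=x^{14}-x^{11}-x^{10}+x^7-x^4-x^3+1$ and let $\delta$ be the root of $\varphi_{14}$ with $\delta\approx -0.9903988352300419-0.13823945592693967\,i$. Then there exist an automorphism $F$ of the lattice $\Lambda$ and an element $\sigma\in\Lambda_{\mathbb{C}}$ such that: (1) the characteristic polynomial of $F$ is $(x-1)^8\varphi_{14}(x)$; (2) $(\sigma,\sigma)=0$ and $(\sigma,\overline{\sigma})>0$; (3) $F(\sigma)=\delta\sigma$ (where $F$ also denotes its $\mathbb{C}$-linear extension).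
   Context: $H$ denotes the even unimodular lattice of signature $(1,1)$ and $E_8(-1)$ the even unimodular negative definite lattice of rank $8$. $\varphi_{14}$ is an irreducible reciprocal (Salem) polynomial; besides its real roots $\alpha_{14}=1.200026\ldots$ and $1/\alpha_{14}$ it has $12$ roots on the unit circle, and $\delta$ is the particular one specified by its approximate value. *)

theory Defs
  imports "Jordan_Normal_Form.Char_Poly" "HOL-Computational_Algebra.Polynomial"
begin

text \<open>Gram matrix of E8(-1): negative of the E8 Cartan matrix. Dynkin diagram:
 chain 0-1-2-3-4-5-6 with node 7 attached to node 2 (arms of length 2, 4, 1).\<close>
definition e8_adj :: "nat \<Rightarrow> nat \<Rightarrow> bool" where
  "e8_adj i j = ((i < 7 \<and> j < 7 \<and> (i = j + 1 \<or> j = i + 1)) \<or> (i = 7 \<and> j = 2) \<or> (i = 2 \<and> j = 7))"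

definition e8m_entry :: "nat \<Rightarrow> nat \<Rightarrow> int" where
  "e8m_entry i j = (if i = j then -2 else if e8_adj i j then 1 else 0)"

text \<open>Gram matrix of the K3 lattice E8(-1)+E8(-1)+H+H+H on Z^22:
 indices 0..7 and 8..15 are the two E8(-1) blocks, 16..21 are three copies of H.\<close>
definition k3_entry :: "nat \<Rightarrow> nat \<Rightarrow> int" where
  "k3_entry i j =
     (if i < 8 \<and> j < 8 then e8m_entry i j
      else if 8 \<le> i \<and> i < 16 \<and> 8 \<le> j \<and> j < 16 then e8m_entry (i - 8) (j - 8)
      else if 16 \<le> i \<and> i < 22 \<and> 16 \<le> j \<and> j < 22 \<and> (i - 16) div 2 = (j - 16) div 2 \<and> i \<noteq> j then 1
      else 0)"

definition K3_gram :: "int mat" where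
  "K3_gram = mat 22 22 (\<lambda>(i, j). k3_entry i j)"

definition K3_aut :: "int mat \<Rightarrow> bool" where
  "K3_aut F \<longleftrightarrow> F \<in> carrier_mat 22 22 \<and> invertible_mat F \<and> transpose_mat F * K3_gram * F = K3_gram"

definition K3_formC :: "complex vec \<Rightarrow> complex vec \<Rightarrow> complex" where
  "K3_formC v w = v \<bullet> (map_mat of_int K3_gram *\<^sub>v w)"

definition phi14 :: "int poly" where
  "phi14 = Poly [1, 0, 0, -1, -1, 0, 0, 1, 0, 0, -1, -1, 0, 0, 1]"

end

theory Submission
  imports Defs
begin

text \<open>
  The automorphism F is the identity on the first copy of E8(-1) and acts on the complementary
  rank-14 sublattice by an integral matrix F14 that is conjugate over the integers, via B, to the
  companion matrix C of phi14. Hence the characteristic polynomial of F is (x - 1)^8 phi14, and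
  P = (0; B^-1) satisfies F P = P C. For a root \<delta> of phi14 the vector w of Horner tails of phi14
  at \<delta> is a \<delta>-eigenvector of C, so \<sigma> = P w is a \<delta>-eigenvector of F. Since F is an isometry
  and \<delta>^2 \<noteq> 1, (\<sigma>, \<sigma>) = \<delta>^2 (\<sigma>, \<sigma>) vanishes; (\<sigma>, conj \<sigma>) is real because the form is
  symmetric, and its positivity is certified by fixed-point interval arithmetic on a box
  around \<delta>.
\<close>

section \<open>Matrices as lists of rows\<close>

definition rows_shape :: "nat \<Rightarrow> nat \<Rightarrow> 'a list list \<Rightarrow> bool" where
  "rows_shape n m A \<longleftrightarrow> length A = n \<and> (\<forall>r\<in>set A. length r = m)"

definition rows_of :: "nat \<Rightarrow> nat \<Rightarrow> (nat \<Rightarrow> nat \<Rightarrow> 'a) \<Rightarrow> 'a list list" where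
  "rows_of n m f = map (\<lambda>i. map (f i) [0..<m]) [0..<n]"

definition rows_mult :: "'a::comm_ring_1 list list \<Rightarrow> 'a list list \<Rightarrow> 'a list list" where
  "rows_mult A B = map (\<lambda>r. map (\<lambda>c. sum_list (map2 (*) r c)) (List.transpose B)) A"

definition one_rows :: "nat \<Rightarrow> 'a::{zero,one} list list" where
  "one_rows n = rows_of n n (\<lambda>i j. if i = j then 1 else 0)"

definition one_block_rows :: "nat \<Rightarrow> 'a::{zero,one} list list \<Rightarrow> 'a list list" where
  "one_block_rows k A = rows_of (k + length A) (k + length A)
     (\<lambda>i j. if i < k \<or> j < k then (if i = j then 1 else 0) else A ! (i - k) ! (j - k))"

lemma rows_shape_rows_of: "rows_shape n m (rows_of n m f)"
  by (auto simp: rows_shape_def rows_of_def)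

lemma mat_of_rows_list_rows_of: "mat_of_rows_list m (rows_of n m f) = mat n m (\<lambda>(i, j). f i j)"
  by (auto simp: mat_of_rows_list_def rows_of_def)

lemma mat_of_rows_list_one_rows: "mat_of_rows_list n (one_rows n) = 1\<^sub>m n"
  by (simp add: one_rows_def mat_of_rows_list_rows_of one_mat_def)

lemma mat_of_rows_list_carrier: "rows_shape n m A \<Longrightarrow> mat_of_rows_list m A \<in> carrier_mat n m"
  by (simp add: mat_of_rows_list_def rows_shape_def)

lemma transpose_rows_shape:
  assumes "rows_shape k m B" "0 < k"
  shows "List.transpose B = map (\<lambda>j. map (\<lambda>l. B ! l ! j) [0..<k]) [0..<m]"
proof -
  have "length B = k" using assms(1) by (simp add: rows_shape_def)
  then show ?thesis
    using assms transpose_rectangle[of B m] by (auto simp: rows_shape_def)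
qed

lemma rows_shape_mult:
  assumes "rows_shape n k A" "rows_shape k m B" "0 < k"
  shows "rows_shape n m (rows_mult A B)"
  using assms transpose_rows_shape[OF assms(2,3)] by (auto simp: rows_shape_def rows_mult_def)

lemma rows_shape_transpose:
  assumes "rows_shape n m A" "0 < n"
  shows "rows_shape m n (List.transpose A)"
  using assms transpose_rows_shape[OF assms] by (auto simp: rows_shape_def)

lemma mat_of_rows_list_mult:
  assumes A: "rows_shape n k A" and B: "rows_shape k m B" and k: "0 < k"
  shows "mat_of_rows_list k A * mat_of_rows_list m B = mat_of_rows_list m (rows_mult A B)"
proof (rule eq_matI)
  fix i j assume "i < dim_row (mat_of_rows_list m (rows_mult A B))"
    and "j < dim_col (mat_of_rows_list m (rows_mult A B))"
  then have i: "i < n" and j: "j < m"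
    using A by (auto simp: mat_of_rows_list_def rows_mult_def rows_shape_def)
  have "rows_mult A B ! i ! j = sum_list (map2 (*) (A ! i) (map (\<lambda>l. B ! l ! j) [0..<k]))"
    using A i j k B by (simp add: rows_mult_def rows_shape_def transpose_rows_shape[OF B k])
  also have "\<dots> = (\<Sum>l<k. A ! i ! l * B ! l ! j)"
    using A i by (simp add: sum_list_sum_nth atLeast0LessThan rows_shape_def)
  finally show "(mat_of_rows_list k A * mat_of_rows_list m B) $$ (i, j) =
      mat_of_rows_list m (rows_mult A B) $$ (i, j)"
    using A B i j by (auto simp: mat_of_rows_list_def rows_mult_def rows_shape_def scalar_prod_def
        atLeast0LessThan intro!: sum.cong)
qed (use A in \<open>auto simp: mat_of_rows_list_def rows_mult_def rows_shape_def\<close>)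

lemma transpose_mat_of_rows_list:
  assumes "rows_shape n m A" "0 < n"
  shows "transpose_mat (mat_of_rows_list m A) = mat_of_rows_list n (List.transpose A)"
  using assms transpose_rows_shape[OF assms]
  by (intro eq_matI) (auto simp: mat_of_rows_list_def rows_shape_def)

lemma mat_of_rows_list_one_block_rows:
  assumes "rows_shape m m A"
  shows "mat_of_rows_list (k + m) (one_block_rows k A) =
    four_block_mat (1\<^sub>m k) (0\<^sub>m k m) (0\<^sub>m m k) (mat_of_rows_list m A)"
proof -
  have "length A = m" using assms by (simp add: rows_shape_def)
  then show ?thesis
    unfolding one_block_rows_def \<open>length A = m\<close> mat_of_rows_list_rows_of
    using assms
    by (intro eq_matI) (auto simp: four_block_mat_def mat_of_rows_list_def rows_shape_def)
qed

section \<open>Block matrices and companion matrices\<close>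

lemma invertible_four_block_one:
  fixes M N :: "'a::comm_ring_1 mat"
  assumes M: "M \<in> carrier_mat m m" and N: "N \<in> carrier_mat m m" and "M * N = 1\<^sub>m m" "N * M = 1\<^sub>m m"
  shows "invertible_mat (four_block_mat (1\<^sub>m k) (0\<^sub>m k m) (0\<^sub>m m k) M)"
proof -
  let ?F = "four_block_mat (1\<^sub>m k) (0\<^sub>m k m) (0\<^sub>m m k) M"
    and ?G = "four_block_mat (1\<^sub>m k) (0\<^sub>m k m) (0\<^sub>m m k) N"
  have "?F * ?G = 1\<^sub>m (k + m)" "?G * ?F = 1\<^sub>m (k + m)"
    using assms
    by (simp_all add: mult_four_block_mat[OF one_carrier_mat zero_carrier_mat zero_carrier_mat M
        one_carrier_mat zero_carrier_mat zero_carrier_mat N]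
      mult_four_block_mat[OF one_carrier_mat zero_carrier_mat zero_carrier_mat N
        one_carrier_mat zero_carrier_mat zero_carrier_mat M])
  moreover have "?F \<in> carrier_mat (k + m) (k + m)" "?G \<in> carrier_mat (k + m) (k + m)"
    using M N by auto
  ultimately show ?thesis
    using M unfolding invertible_mat_def inverts_mat_def by (intro conjI exI[of _ ?G]) auto
qed

lemma char_poly_four_block_diag:
  fixes A D :: "'a::idom mat"
  assumes A: "A \<in> carrier_mat n n" and D: "D \<in> carrier_mat m m"
  shows "char_poly (four_block_mat A (0\<^sub>m n m) (0\<^sub>m m n) D) = char_poly A * char_poly D"
proof -
  have "char_poly_matrix (four_block_mat A (0\<^sub>m n m) (0\<^sub>m m n) D) =
    four_block_mat (char_poly_matrix A) (0\<^sub>m n m) (0\<^sub>m m n) (char_poly_matrix D)"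
    using A D by (intro eq_matI) (auto simp: char_poly_matrix_def)
  then show ?thesis unfolding char_poly_def
    using A D by (simp add: det_four_block_mat_lower_left_zero[of _ n _ m])
qed

lemma char_poly_one_mat: "char_poly (1\<^sub>m n :: 'a::comm_ring_1 mat) = [:-1,1:]^n"
proof -
  have "char_poly (1\<^sub>m n :: 'a mat) = (\<Prod>a\<leftarrow>diag_mat (1\<^sub>m n). [:- a, 1:])"
    by (rule char_poly_upper_triangular[of _ n]) (auto simp: upper_triangular_def)
  also have "diag_mat (1\<^sub>m n :: 'a mat) = replicate n 1"
    by (rule nth_equalityI) (auto simp: diag_mat_def)
  finally show ?thesis by (simp add: prod_list_replicate)
qed

definition companion_char_mat :: "nat \<Rightarrow> (nat \<Rightarrow> 'a::comm_ring_1) \<Rightarrow> 'a poly mat" where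
  "companion_char_mat n c = mat n n (\<lambda>(i,j). (if i = j then [:0,1:] else 0) +
      (if i = Suc j then -1 else if j = n - 1 then [:c i:] else 0))"

lemma det_companion_char_mat:
  "n \<ge> 1 \<Longrightarrow> det (companion_char_mat n c) = [:0,1:]^n + (\<Sum>i<n. [:c i:] * [:0,1:]^i)"
proof (induction n arbitrary: c rule: nat_induct_at_least)
  case base
  have "det (companion_char_mat 1 c) = companion_char_mat 1 c $$ (0,0)"
    by (rule det_single) (simp add: companion_char_mat_def)
  also have "\<dots> = [:0,1:] + [:c 0:]" by (simp add: companion_char_mat_def)
  finally show ?case by simp
next
  case (Suc n)
  let ?X = "companion_char_mat (Suc n) c"
  have X: "?X \<in> carrier_mat (Suc n) (Suc n)" by (simp add: companion_char_mat_def)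
  have "det ?X = (\<Sum>j<Suc n. ?X $$ (0,j) * cofactor ?X 0 j)"
    by (rule laplace_expansion_row[OF X], simp)
  also have "\<dots> = (\<Sum>j\<in>{0,n}. ?X $$ (0,j) * cofactor ?X 0 j)"
    by (rule sum.mono_neutral_right) (use Suc.hyps in \<open>auto simp: companion_char_mat_def\<close>)
  also have "\<dots> = [:0,1:] * cofactor ?X 0 0 + [:c 0:] * cofactor ?X 0 n"
    using Suc.hyps by (simp add: companion_char_mat_def)
  finally have e1: "det ?X = [:0,1:] * cofactor ?X 0 0 + [:c 0:] * cofactor ?X 0 n" .
  have e2: "mat_delete ?X 0 0 = companion_char_mat n (\<lambda>i. c (Suc i))"
    by (rule eq_matI) (auto simp: companion_char_mat_def mat_delete_def)
  have e3: "det (mat_delete ?X 0 n) = (-1)^n"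
  proof -
    have ut: "upper_triangular (mat_delete ?X 0 n)"
      unfolding upper_triangular_def by (auto simp: companion_char_mat_def mat_delete_def)
    have "det (mat_delete ?X 0 n) = prod_list (diag_mat (mat_delete ?X 0 n))"
      by (rule det_upper_triangular[OF ut, of n], simp add: companion_char_mat_def mat_delete_def)
    also have "diag_mat (mat_delete ?X 0 n) = replicate n (-1)"
      by (rule nth_equalityI) (auto simp: diag_mat_def companion_char_mat_def mat_delete_def)
    finally show ?thesis by simp
  qed
  have "det ?X = [:0,1:] * det (companion_char_mat n (\<lambda>i. c (Suc i))) + [:c 0:] * ((-1)^n * (-1)^n)"
    unfolding e1 cofactor_def e2 e3 by simp
  also have "\<dots> = [:0,1:] * ([:0,1:]^n + (\<Sum>i<n. [:c (Suc i):] * [:0,1:]^i)) + [:c 0:]"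
    using Suc.IH by (simp flip: power_mult_distrib)
  also have "\<dots> = [:0,1:]^Suc n + ([:c 0:] * [:0,1:]^0 + (\<Sum>i<n. [:c (Suc i):] * [:0,1:]^Suc i))"
    by (simp add: sum_distrib_left algebra_simps)
  also have "[:c 0:] * [:0,1:]^0 + (\<Sum>i<n. [:c (Suc i):] * [:0,1:]^Suc i) =
      (\<Sum>i<Suc n. [:c i:] * [:0,1:]^i)"
    by (rule sum.lessThan_Suc_shift[symmetric])
  finally show ?case .
qed


definition companion_mat :: "'a::comm_ring_1 poly \<Rightarrow> 'a mat" where
  "companion_mat f = mat (degree f) (degree f)
     (\<lambda>(i, j). if i = Suc j then 1 else if j = degree f - 1 then - coeff f i else 0)"

lemma char_poly_companion_mat:
  fixes f :: "'a::comm_ring_1 poly"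
  assumes "monic f" "1 \<le> degree f"
  shows "char_poly (companion_mat f) = f"
proof -
  let ?n = "degree f"
  have "[:-1:] = (-1 :: 'a poly)" by (simp add: one_pCons)
  then have "char_poly_matrix (companion_mat f) = companion_char_mat ?n (coeff f)"
    by (intro eq_matI) (auto simp: char_poly_matrix_def companion_char_mat_def companion_mat_def)
  then have "char_poly (companion_mat f) = [:0,1:]^?n + (\<Sum>i<?n. [:coeff f i:] * [:0,1:]^i)"
    using assms(2) by (simp add: char_poly_def det_companion_char_mat)
  also have "\<dots> = (\<Sum>i\<le>?n. monom (coeff f i) i)"
    using assms(1) by (simp add: lessThan_Suc_atMost[symmetric] monom_altdef smult_sum2 add.commute)
  also have "\<dots> = f" by (rule poly_as_sum_of_monoms)
  finally show ?thesis .
qed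

text \<open>
  Entry i is the Horner tail sum_{j > i} c_j x^(j - i - 1) of f; coefficients beyond the degree
  vanish.
\<close>

definition companion_eigvec :: "'a::comm_ring_1 poly \<Rightarrow> 'a \<Rightarrow> 'a vec" where
  "companion_eigvec f x = vec (degree f) (\<lambda>i. \<Sum>k<degree f. coeff f (i + 1 + k) * x ^ k)"

lemma companion_mat_eigvec:
  fixes f :: "'a::comm_ring_1 poly"
  assumes monic: "monic f" and root: "poly f x = 0"
  shows "companion_mat f *\<^sub>v companion_eigvec f x = x \<cdot>\<^sub>v companion_eigvec f x"
proof (rule eq_vecI)
  let ?n = "degree f" and ?w = "companion_eigvec f x"
  have tail: "(\<Sum>k<Suc ?n. coeff f (i + k) * x ^ k) =
      (if i = 0 then 0 else \<Sum>k<?n. coeff f (i + k) * x ^ k)" for i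
  proof (cases "i = 0")
    case True
    then show ?thesis using root by (simp add: poly_altdef lessThan_Suc_atMost)
  next
    case False
    then show ?thesis by (simp add: coeff_eq_0)
  qed
  have shift: "x * ?w $ i = (\<Sum>k<Suc ?n. coeff f (i + k) * x ^ k) - coeff f i" if "i < ?n" for i
  proof -
    have "(\<Sum>k<Suc ?n. coeff f (i + k) * x ^ k) =
        coeff f i + (\<Sum>k<?n. coeff f (i + Suc k) * x ^ Suc k)"
      by (simp only: sum.lessThan_Suc_shift) simp
    then show ?thesis using that by (simp add: companion_eigvec_def sum_distrib_left algebra_simps)
  qed
  have last: "?w $ (?n - 1) = 1" if "0 < ?n"
  proof -
    have "coeff f (?n - 1 + 1 + k) * x ^ k = (if k = 0 then 1 else 0)" for k
      using monic that by (auto simp: coeff_eq_0)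
    then show ?thesis using that by (simp add: companion_eigvec_def)
  qed
  fix i assume "i < dim_vec (x \<cdot>\<^sub>v ?w)"
  then have i: "i < ?n" by (simp add: companion_eigvec_def)
  have "(companion_mat f *\<^sub>v ?w) $ i =
      (\<Sum>j<?n. (if i = Suc j then ?w $ j else 0) - (if j = ?n - 1 then coeff f i * ?w $ j else 0))"
    using i by (auto simp: companion_mat_def companion_eigvec_def mult_mat_vec_def scalar_prod_def
        atLeast0LessThan intro!: sum.cong)
  also have "\<dots> = (if i = 0 then 0 else ?w $ (i - 1)) - coeff f i"
  proof -
    have "(\<Sum>j<?n. if i = Suc j then ?w $ j else 0) = (if i = 0 then 0 else ?w $ (i - 1))"
      using i by (cases i) auto
    then show ?thesis using i last by (simp add: sum_subtractf)
  qed
  also have "\<dots> = x * ?w $ i"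
  proof -
    have "?w $ (i - 1) = (\<Sum>k<?n. coeff f (i + k) * x ^ k)" if "0 < i"
      using i that by (simp add: companion_eigvec_def)
    then show ?thesis using shift[OF i] tail[of i] by auto
  qed
  finally show "(companion_mat f *\<^sub>v ?w) $ i = (x \<cdot>\<^sub>v ?w) $ i"
    using i by (simp add: companion_eigvec_def)
qed (simp add: companion_mat_def companion_eigvec_def)

lemma companion_mat_map_of_int:
  "companion_mat (map_poly (of_int :: int \<Rightarrow> 'a::{comm_ring_1, ring_char_0}) f) =
    map_mat of_int (companion_mat f)"
proof -
  have "degree (map_poly (of_int :: int \<Rightarrow> 'a) f) = degree f" by (rule degree_map_poly) simp
  then show ?thesis by (intro eq_matI) (auto simp: companion_mat_def coeff_map_poly)
qed

lemma companion_eigvec_map_of_int: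
  fixes f :: "int poly" and x :: "'a::{comm_ring_1, ring_char_0}"
  defines "n \<equiv> degree f"
  shows "companion_eigvec (map_poly of_int f) x =
    map_mat of_int (mat_of_rows_list n (rows_of n n (\<lambda>i k. coeff f (i + 1 + k)))) *\<^sub>v
      vec n (\<lambda>k. x ^ k)"
proof -
  have "degree (map_poly (of_int :: int \<Rightarrow> 'a) f) = n" unfolding n_def by (rule degree_map_poly) simp
  then show ?thesis
    by (intro eq_vecI) (auto simp: companion_eigvec_def coeff_map_poly mat_of_rows_list_rows_of
        scalar_prod_def atLeast0LessThan)
qed

section \<open>Eigenvectors and bilinear forms\<close>

lemma intertwined_eigvec:
  fixes F P C :: "'a::field mat"
  assumes F: "F \<in> carrier_mat n n" and P: "P \<in> carrier_mat n m" and C: "C \<in> carrier_mat m m"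
    and w: "w \<in> carrier_vec m" and FP: "F * P = P * C" and ev: "C *\<^sub>v w = d \<cdot>\<^sub>v w"
  shows "F *\<^sub>v (P *\<^sub>v w) = d \<cdot>\<^sub>v (P *\<^sub>v w)"
proof -
  have "F *\<^sub>v (P *\<^sub>v w) = (P * C) *\<^sub>v w"
    using F P w by (simp flip: FP add: assoc_mult_mat_vec[of _ n n _ m])
  also have "\<dots> = P *\<^sub>v (d \<cdot>\<^sub>v w)"
    using P C w by (simp add: assoc_mult_mat_vec[of _ n m _ m] ev)
  finally show ?thesis using P w by (simp add: mult_mat_vec[of _ n m])
qed

lemma eigvec_isotropic:
  fixes F K :: "'a::field mat"
  assumes F: "F \<in> carrier_mat n n" and K: "K \<in> carrier_mat n n" and s: "s \<in> carrier_vec n"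
    and iso: "transpose_mat F * K * F = K" and ev: "F *\<^sub>v s = d \<cdot>\<^sub>v s" and d: "d^2 \<noteq> 1"
  shows "s \<bullet> (K *\<^sub>v s) = 0"
proof -
  have "s \<bullet> (K *\<^sub>v s) = s \<bullet> ((transpose_mat F * K * F) *\<^sub>v s)" using iso by simp
  also have "\<dots> = s \<bullet> (transpose_mat F *\<^sub>v (K *\<^sub>v (F *\<^sub>v s)))"
    using F K s by (simp add: assoc_mult_mat_vec[of _ n n _ n])
  also have "\<dots> = (F *\<^sub>v s) \<bullet> (K *\<^sub>v (F *\<^sub>v s))"
    using transpose_vec_mult_scalar[of "transpose_mat F" n n "K *\<^sub>v (F *\<^sub>v s)" s] F K s
    by simp
  also have "\<dots> = d * d * (s \<bullet> (K *\<^sub>v s))"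
    unfolding ev using K s
    by (simp add: mult_mat_vec[of _ n n] smult_scalar_prod_distrib[of _ n]
        scalar_prod_smult_distrib[of _ n])
  finally have "(1 - d^2) * (s \<bullet> (K *\<^sub>v s)) = 0" by (simp add: algebra_simps power2_eq_square)
  with d show ?thesis by simp
qed

lemma Im_hermitian_form:
  fixes w :: "complex vec" and G :: "int mat"
  assumes w: "w \<in> carrier_vec n" and G: "G \<in> carrier_mat n n"
    and sym: "\<And>i j. i < n \<Longrightarrow> j < n \<Longrightarrow> G $$ (i,j) = G $$ (j,i)"
  shows "Im (w \<bullet> (map_mat of_int G *\<^sub>v map_vec cnj w)) = 0"
proof -
  have "Im (w \<bullet> (map_mat of_int G *\<^sub>v map_vec cnj w)) =
    (\<Sum>i<n. \<Sum>j<n. of_int (G $$ (i,j)) * (Im (w$i) * Re (w$j))) - 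
    (\<Sum>i<n. \<Sum>j<n. of_int (G $$ (i,j)) * (Re (w$i) * Im (w$j)))"
    using w G
    by (auto simp: scalar_prod_def mult_mat_vec_def row_def atLeast0LessThan sum_distrib_left
        algebra_simps sum_subtractf[symmetric] intro!: sum.cong)
  also have "(\<Sum>i<n. \<Sum>j<n. of_int (G $$ (i,j)) * (Re (w$i) * Im (w$j))) =
     (\<Sum>j<n. \<Sum>i<n. of_int (G $$ (i,j)) * (Re (w$i) * Im (w$j)))"
    by (rule sum.swap)
  also have "\<dots> = (\<Sum>i<n. \<Sum>j<n. of_int (G $$ (i,j)) * (Im (w$i) * Re (w$j)))"
    using sym by (intro sum.cong refl) (auto simp: algebra_simps)
  finally show ?thesis by simp
qed

lemma cnj_mult_mat_vec:
  fixes P :: "int mat" and w :: "complex vec"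
  assumes "P \<in> carrier_mat n m" "w \<in> carrier_vec m"
  shows "map_vec cnj (map_mat of_int P *\<^sub>v w) = map_mat of_int P *\<^sub>v map_vec cnj w"
  using assms by (intro eq_vecI) (auto simp: mult_mat_vec_def scalar_prod_def row_def)

lemma Re_hermitian_form:
  fixes v :: "complex vec" and G :: "int mat"
  assumes v: "v \<in> carrier_vec n" and G: "G \<in> carrier_mat n n"
  shows "Re (v \<bullet> (map_mat of_int G *\<^sub>v map_vec cnj v)) =
    (\<Sum>i<n. Re (v $ i) * Re ((map_mat of_int G *\<^sub>v v) $ i) +
      Im (v $ i) * Im ((map_mat of_int G *\<^sub>v v) $ i))"
  unfolding cnj_mult_mat_vec[OF G v, symmetric]
  using v G by (simp add: scalar_prod_def atLeast0LessThan sum_negf)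

lemma hermitian_form_pullback:
  fixes P K :: "int mat" and w :: "complex vec"
  assumes P: "P \<in> carrier_mat n m" and K: "K \<in> carrier_mat n n" and w: "w \<in> carrier_vec m"
  shows "(map_mat of_int P *\<^sub>v w) \<bullet> (map_mat of_int K *\<^sub>v map_vec cnj (map_mat of_int P *\<^sub>v w)) =
    w \<bullet> (map_mat of_int (transpose_mat P * K * P) *\<^sub>v map_vec cnj w)"
proof -
  let ?P = "map_mat (of_int :: int \<Rightarrow> complex) P" and ?K = "map_mat (of_int :: int \<Rightarrow> complex) K"
    and ?v = "map_vec cnj w"
  have Pc: "?P \<in> carrier_mat n m" and Kc: "?K \<in> carrier_mat n n" and v: "?v \<in> carrier_vec m"
    using P K w by auto
  have "(?P *\<^sub>v w) \<bullet> (?K *\<^sub>v map_vec cnj (?P *\<^sub>v w)) = (?P *\<^sub>v w) \<bullet> ((?K * ?P) *\<^sub>v ?v)"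
    using Kc Pc v by (simp add: cnj_mult_mat_vec[OF P w] assoc_mult_mat_vec[of _ n n _ m])
  also have "\<dots> = w \<bullet> (transpose_mat ?P *\<^sub>v ((?K * ?P) *\<^sub>v ?v))"
    using transpose_vec_mult_scalar[of "transpose_mat ?P" m n "(?K * ?P) *\<^sub>v ?v" w] Pc Kc v w
    by simp
  also have "\<dots> = w \<bullet> ((transpose_mat ?P * ?K * ?P) *\<^sub>v ?v)"
    using Kc Pc v by (simp add: assoc_mult_mat_vec[of _ m n _ m] assoc_mult_mat[of _ m n _ n _ m])
  also have "transpose_mat ?P * ?K * ?P = map_mat of_int (transpose_mat P * K * P)"
  proof -
    have "map_mat of_int (transpose_mat P * K) = transpose_mat ?P * ?K"
      using P K by (simp add: of_int_hom.mat_hom_mult[of _ m n _ n] map_mat_transpose)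
    moreover have
      "map_mat of_int (transpose_mat P * K * P) = map_mat of_int (transpose_mat P * K) * ?P"
      using P K by (intro of_int_hom.mat_hom_mult) auto
    ultimately show ?thesis by simp
  qed
  finally show ?thesis .
qed

section \<open>Fixed-point interval arithmetic\<close>

type_synonym ivl = "int \<times> int"

definition in_ivl :: "int \<Rightarrow> real \<Rightarrow> ivl \<Rightarrow> bool" where
  "in_ivl s x I \<longleftrightarrow> of_int (fst I) \<le> x * of_int s \<and> x * of_int s \<le> of_int (snd I)"

definition ivl_add :: "ivl \<Rightarrow> ivl \<Rightarrow> ivl" where
  "ivl_add I J = (fst I + fst J, snd I + snd J)"

definition ivl_scale :: "int \<Rightarrow> ivl \<Rightarrow> ivl" where
  "ivl_scale k I = (if 0 \<le> k then (k * fst I, k * snd I) else (k * snd I, k * fst I))"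

text \<open>Products are rounded outward: \<open>- (- m div s)\<close> is the ceiling of m / s.\<close>

definition ivl_mult :: "int \<Rightarrow> ivl \<Rightarrow> ivl \<Rightarrow> ivl" where
  "ivl_mult s I J = (case (I, J) of ((a, b), (c, d)) \<Rightarrow>
     (min (min (a * c) (a * d)) (min (b * c) (b * d)) div s,
      - (- max (max (a * c) (a * d)) (max (b * c) (b * d)) div s)))"

lemma in_ivl_add: "in_ivl s x I \<Longrightarrow> in_ivl s y J \<Longrightarrow> in_ivl s (x + y) (ivl_add I J)"
  by (auto simp: in_ivl_def ivl_add_def algebra_simps)

lemma in_ivl_scale:
  assumes "in_ivl s x I" shows "in_ivl s (of_int k * x) (ivl_scale k I)"
proof (cases "0 \<le> k")
  case True
  then show ?thesis using assms mult_left_mono[of _ _ "of_int k :: real"]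
    by (auto simp: in_ivl_def ivl_scale_def mult.assoc)
next
  case False
  then show ?thesis using assms mult_left_mono_neg[of _ _ "of_int k :: real"]
    by (auto simp: in_ivl_def ivl_scale_def mult.assoc)
qed

lemma between_mult_right:
  fixes x y a b :: real
  assumes "a \<le> x" "x \<le> b"
  shows "min (a * y) (b * y) \<le> x * y \<and> x * y \<le> max (a * y) (b * y)"
  using assms mult_right_mono[of a x y] mult_right_mono[of x b y]
    mult_right_mono_neg[of a x y] mult_right_mono_neg[of x b y]
  by (cases "y \<ge> 0") auto

lemma mult_between_corners:
  fixes x y a b c d :: real
  assumes "a \<le> x" "x \<le> b" "c \<le> y" "y \<le> d"
  shows "min (min (a * c) (a * d)) (min (b * c) (b * d)) \<le> x * y \<and>
         x * y \<le> max (max (a * c) (a * d)) (max (b * c) (b * d))"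
  using between_mult_right[OF assms(1,2), of y] between_mult_right[OF assms(3,4), of a]
    between_mult_right[OF assms(3,4), of b]
  by (auto simp: mult.commute)

lemma in_ivl_mult:
  assumes s: "0 < s" and x: "in_ivl s x I" and y: "in_ivl s y J"
  shows "in_ivl s (x * y) (ivl_mult s I J)"
proof -
  obtain a b c d where I: "I = (a, b)" and J: "J = (c, d)" by fastforce
  define lo where "lo = min (min (a * c) (a * d)) (min (b * c) (b * d))"
  define hi where "hi = max (max (a * c) (a * d)) (max (b * c) (b * d))"
  have "of_int lo \<le> (x * s) * (y * s) \<and> (x * s) * (y * s) \<le> of_int hi"
    using mult_between_corners[of a "x * s" b c "y * s" d] x y
    unfolding lo_def hi_def I J in_ivl_def by (simp add: of_int_min of_int_max)
  then have bounds: "of_int lo / of_int s \<le> x * y * s \<and> x * y * s \<le> of_int hi / of_int s"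
    using s by (simp add: field_simps)
  have "of_int (lo div s) \<le> (of_int lo / of_int s :: real)"
    by (metis floor_divide_of_int_eq of_int_floor_le)
  moreover have "(of_int hi / of_int s :: real) \<le> of_int (- (- hi div s))"
  proof -
    have "of_int (- hi div s) \<le> (of_int (- hi) / of_int s :: real)"
      by (metis floor_divide_of_int_eq of_int_floor_le)
    then show ?thesis by simp
  qed
  ultimately show ?thesis
    using bounds unfolding in_ivl_def ivl_mult_def I J lo_def hi_def by simp
qed

fun ivl_lincomb :: "int list \<Rightarrow> ivl list \<Rightarrow> ivl" where
  "ivl_lincomb (c # cs) (I # Is) = ivl_add (ivl_scale c I) (ivl_lincomb cs Is)"
| "ivl_lincomb _ _ = (0, 0)"

lemma in_ivl_lincomb:
  assumes "length cs = length Is" "\<And>k. k < length Is \<Longrightarrow> in_ivl s (x k) (Is ! k)"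
  shows "in_ivl s (\<Sum>k<length Is. of_int (cs ! k) * x k) (ivl_lincomb cs Is)"
  using assms
proof (induction cs arbitrary: Is x)
  case Nil
  then show ?case by (simp add: in_ivl_def)
next
  case (Cons c cs)
  then obtain I Is' where Is: "Is = I # Is'" by (cases Is) auto
  have "in_ivl s (\<Sum>k<length Is'. of_int (cs ! k) * x (Suc k)) (ivl_lincomb cs Is')"
    using Cons.prems(1) Cons.prems(2)[of "Suc k" for k] by (intro Cons.IH) (auto simp: Is)
  moreover have "in_ivl s (of_int c * x 0) (ivl_scale c I)"
    using Cons.prems(2)[of 0] by (intro in_ivl_scale) (simp add: Is)
  ultimately show ?case by (simp del: sum.lessThan_Suc add: Is sum.lessThan_Suc_shift in_ivl_add)
qed

fun ivl_dot :: "int \<Rightarrow> ivl list \<Rightarrow> ivl list \<Rightarrow> ivl" where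
  "ivl_dot s (I # Is) (J # Js) = ivl_add (ivl_mult s I J) (ivl_dot s Is Js)"
| "ivl_dot s _ _ = (0, 0)"

lemma in_ivl_dot:
  assumes s: "0 < s" and "length Is = length Js"
    and "\<And>k. k < length Is \<Longrightarrow> in_ivl s (x k) (Is ! k) \<and> in_ivl s (y k) (Js ! k)"
  shows "in_ivl s (\<Sum>k<length Is. x k * y k) (ivl_dot s Is Js)"
  using assms(2-)
proof (induction Is arbitrary: Js x y)
  case Nil
  then show ?case by (simp add: in_ivl_def)
next
  case (Cons I Is)
  then obtain J Js' where Js: "Js = J # Js'" by (cases Js) auto
  have "in_ivl s (\<Sum>k<length Is. x (Suc k) * y (Suc k)) (ivl_dot s Is Js')"
    using Cons.prems(1) Cons.prems(2)[of "Suc k" for k] by (intro Cons.IH) (auto simp: Js)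
  moreover have "in_ivl s (x 0 * y 0) (ivl_mult s I J)"
    using Cons.prems(2)[of 0] by (intro in_ivl_mult[OF s]) (auto simp: Js)
  ultimately show ?case by (simp del: sum.lessThan_Suc add: Js sum.lessThan_Suc_shift in_ivl_add)
qed

definition in_civl :: "int \<Rightarrow> complex \<Rightarrow> ivl \<times> ivl \<Rightarrow> bool" where
  "in_civl s z Z \<longleftrightarrow> in_ivl s (Re z) (fst Z) \<and> in_ivl s (Im z) (snd Z)"

definition civl_mult :: "int \<Rightarrow> ivl \<times> ivl \<Rightarrow> ivl \<times> ivl \<Rightarrow> ivl \<times> ivl" where
  "civl_mult s Z W =
     (ivl_add (ivl_mult s (fst Z) (fst W)) (ivl_scale (-1) (ivl_mult s (snd Z) (snd W))),
      ivl_add (ivl_mult s (fst Z) (snd W)) (ivl_mult s (snd Z) (fst W)))"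

lemma in_civl_mult:
  assumes "0 < s" "in_civl s z Z" "in_civl s w W"
  shows "in_civl s (z * w) (civl_mult s Z W)"
proof -
  have "in_ivl s (Re z * Re w + of_int (-1) * (Im z * Im w)) (fst (civl_mult s Z W))"
    and "in_ivl s (Re z * Im w + Im z * Re w) (snd (civl_mult s Z W))"
    unfolding civl_mult_def fst_conv snd_conv
    by (intro in_ivl_add in_ivl_scale in_ivl_mult; use assms in \<open>simp add: in_civl_def\<close>)+
  then show ?thesis by (simp add: in_civl_def)
qed

fun civl_powers :: "int \<Rightarrow> ivl \<times> ivl \<Rightarrow> ivl \<times> ivl \<Rightarrow> nat \<Rightarrow> (ivl \<times> ivl) list" where
  "civl_powers s Z W 0 = []"
| "civl_powers s Z W (Suc n) = W # civl_powers s Z (civl_mult s W Z) n"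

lemma length_civl_powers [simp]: "length (civl_powers s Z W n) = n"
  by (induction n arbitrary: W) auto

lemma in_civl_powers:
  assumes s: "0 < s" and z: "in_civl s z Z"
  shows "in_civl s w W \<Longrightarrow> k < n \<Longrightarrow> in_civl s (w * z ^ k) (civl_powers s Z W n ! k)"
proof (induction n arbitrary: w W k)
  case (Suc n)
  have "in_civl s (w * z) (civl_mult s W Z)" by (rule in_civl_mult[OF s Suc.prems(1) z])
  from Suc.IH[OF this] Suc.prems show ?case by (cases k) (simp_all add: mult.assoc)
qed simp

definition in_civl_vec :: "int \<Rightarrow> complex vec \<Rightarrow> (ivl \<times> ivl) list \<Rightarrow> bool" where
  "in_civl_vec s v Zs \<longleftrightarrow> dim_vec v = length Zs \<and> (\<forall>i<length Zs. in_civl s (v $ i) (Zs ! i))"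

lemma in_civl_vec_powers:
  assumes "0 < s" "in_civl s z Z"
  shows "in_civl_vec s (vec n (\<lambda>k. z ^ k)) (civl_powers s Z ((s, s), (0, 0)) n)"
proof -
  have "in_civl s 1 ((s, s), (0, 0))" by (simp add: in_civl_def in_ivl_def)
  from in_civl_powers[OF assms this] show ?thesis by (simp add: in_civl_vec_def)
qed

definition civl_mat_vec :: "int list list \<Rightarrow> (ivl \<times> ivl) list \<Rightarrow> (ivl \<times> ivl) list" where
  "civl_mat_vec A Zs = map (\<lambda>r. (ivl_lincomb r (map fst Zs), ivl_lincomb r (map snd Zs))) A"

lemma in_civl_vec_mat_vec:
  assumes A: "rows_shape n m A" and v: "in_civl_vec s v Zs" and m: "length Zs = m"
  shows "in_civl_vec s (map_mat of_int (mat_of_rows_list m A) *\<^sub>v v) (civl_mat_vec A Zs)"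
  unfolding in_civl_vec_def
proof (intro conjI allI impI)
  show "dim_vec (map_mat of_int (mat_of_rows_list m A) *\<^sub>v v) = length (civl_mat_vec A Zs)"
    using A by (simp add: civl_mat_vec_def mat_of_rows_list_def rows_shape_def)
  fix i assume "i < length (civl_mat_vec A Zs)"
  then have i: "i < n" and r: "length (A ! i) = m"
    using A by (auto simp: civl_mat_vec_def rows_shape_def)
  have entry:
    "(map_mat of_int (mat_of_rows_list m A) *\<^sub>v v) $ i = (\<Sum>k<m. of_int (A ! i ! k) * v $ k)"
    using A i v m by (simp add: mat_of_rows_list_def rows_shape_def in_civl_vec_def scalar_prod_def
        atLeast0LessThan mult.commute)
  have "in_ivl s (\<Sum>k<m. of_int (A ! i ! k) * Re (v $ k)) (ivl_lincomb (A ! i) (map fst Zs))"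
    and "in_ivl s (\<Sum>k<m. of_int (A ! i ! k) * Im (v $ k)) (ivl_lincomb (A ! i) (map snd Zs))"
    using in_ivl_lincomb[of "A ! i" "map fst Zs" s "\<lambda>k. Re (v $ k)"]
      in_ivl_lincomb[of "A ! i" "map snd Zs" s "\<lambda>k. Im (v $ k)"] v m r
    by (auto simp: in_civl_vec_def in_civl_def)
  then show "in_civl s ((map_mat of_int (mat_of_rows_list m A) *\<^sub>v v) $ i) (civl_mat_vec A Zs ! i)"
    using i A by (simp add: entry in_civl_def civl_mat_vec_def rows_shape_def Re_sum Im_sum)
qed

definition ivl_hermitian_form :: "int \<Rightarrow> int list list \<Rightarrow> (ivl \<times> ivl) list \<Rightarrow> ivl" where
  "ivl_hermitian_form s G Zs = (let Ws = civl_mat_vec G Zs in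
     ivl_add (ivl_dot s (map fst Zs) (map fst Ws)) (ivl_dot s (map snd Zs) (map snd Ws)))"

lemma in_ivl_hermitian_form:
  assumes s: "0 < s" and G: "rows_shape n n G" and v: "in_civl_vec s v Zs" and n: "length Zs = n"
  shows "in_ivl s (Re (v \<bullet> (map_mat of_int (mat_of_rows_list n G) *\<^sub>v map_vec cnj v)))
    (ivl_hermitian_form s G Zs)"
proof -
  define u where "u = map_mat of_int (mat_of_rows_list n G) *\<^sub>v v"
  define Ws where "Ws = civl_mat_vec G Zs"
  have u: "in_civl_vec s u Ws" unfolding u_def Ws_def by (rule in_civl_vec_mat_vec[OF G v n])
  have lens: "length Ws = n" using G by (simp add: Ws_def civl_mat_vec_def rows_shape_def)
  have encl: "in_civl s (v $ k) (Zs ! k) \<and> in_civl s (u $ k) (Ws ! k)" if "k < n" for k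
    using that v u n lens unfolding in_civl_vec_def by metis
  have "in_ivl s (\<Sum>k<n. Re (v $ k) * Re (u $ k)) (ivl_dot s (map fst Zs) (map fst Ws))"
    using in_ivl_dot[OF s, of "map fst Zs" "map fst Ws" "\<lambda>k. Re (v $ k)" "\<lambda>k. Re (u $ k)"]
      encl n lens by (simp add: in_civl_def)
  moreover have "in_ivl s (\<Sum>k<n. Im (v $ k) * Im (u $ k)) (ivl_dot s (map snd Zs) (map snd Ws))"
    using in_ivl_dot[OF s, of "map snd Zs" "map snd Ws" "\<lambda>k. Im (v $ k)" "\<lambda>k. Im (u $ k)"]
      encl n lens by (simp add: in_civl_def)
  moreover have "v \<in> carrier_vec n" using v n unfolding in_civl_vec_def by (metis carrier_vecI)
  ultimately show ?thesis
    using Re_hermitian_form[of v n "mat_of_rows_list n G"] mat_of_rows_list_carrier[OF G]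
    unfolding ivl_hermitian_form_def Let_def u_def[symmetric] Ws_def[symmetric]
    by (simp add: sum.distrib in_ivl_add)
qed

lemma in_ivl_pos:
  assumes "0 < s" "in_ivl s x I" "0 < fst I"
  shows "0 < x"
proof -
  have "0 < x * of_int s" using assms(2,3) unfolding in_ivl_def by (smt (verit) of_int_pos)
  then show ?thesis using assms(1) by (simp add: zero_less_mult_iff)
qed

section \<open>The automorphism and the period\<close>

definition phi14_coeffs :: "int list" where
  "phi14_coeffs = [1, 0, 0, -1, -1, 0, 0, 1, 0, 0, -1, -1, 0, 0, 1]"

lemma coeff_phi14: "coeff phi14 = nth_default 0 phi14_coeffs"
  by (simp only: phi14_def phi14_coeffs_def coeff_Poly_eq)

lemma degree_phi14: "degree phi14 = 14"
  by (simp add: phi14_def)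

lemma monic_phi14: "monic phi14"
  by (simp add: degree_phi14 coeff_phi14 phi14_coeffs_def nth_default_def)

lemma monic_of_int_phi14: "monic (map_poly (of_int :: int \<Rightarrow> 'a::{comm_ring_1, ring_char_0}) phi14)"
  using monic_phi14 by (simp add: coeff_map_poly)

text \<open>Computer-found integral certificates; the properties used are checked by evaluation below.\<close>

definition F14_rows :: "int list list" where
  "F14_rows =
    [[311, -136, -140, 433, -371, -151, -79, 264, 12, 34, -49, -85, 182, 1026],
     [469, -205, -210, 653, -558, -225, -125, 396, 18, 52, -70, -123, 275, 1553],
     [686, -301, -306, 955, -815, -328, -185, 578, 27, 77, -100, -178, 402, 2275],
     [571, -251, -255, 796, -679, -273, -155, 482, 23, 64, -83, -148, 335, 1896],
     [251, -111, -109, 348, -294, -114, -80, 207, 12, 30, -28, -56, 147, 843],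
     [113, -50, -48, 155, -129, -48, -42, 91, 6, 14, -8, -20, 66, 383],
     [46, -20, -20, 64, -53, -20, -17, 37, 3, 6, -3, -9, 27, 157],
     [411, -180, -185, 573, -490, -201, -104, 349, 15, 45, -65, -112, 241, 1357],
     [-5, 2, 3, -7, 6, 3, 0, -5, 1, 0, 2, 2, -3, -14],
     [-17, 8, 6, -21, 18, 7, 5, -13, 1, 0, 2, 2, -10, -51],
     [51, -22, -25, 72, -63, -29, -5, 46, 0, 4, -14, -20, 30, 159],
     [32, -13, -17, 47, -42, -21, 0, 31, 1, 3, -11, -16, 19, 103],
     [-463, 203, 211, -647, 558, 232, 105, -400, -15, -49, 82, 137, -272, -1519],
     [-87, 38, 40, -122, 105, 44, 19, -75, -3, -9, 16, 26, -51, -285]]"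

definition F14_inv_rows :: "int list list" where
  "F14_inv_rows =
    [[329, -129, -167, 447, -394, -151, -49, 287, 39, 9, -62, -102, 189, 1011],
     [505, -199, -255, 689, -606, -231, -77, 438, 61, 13, -92, -153, 291, 1559],
     [748, -296, -377, 1021, -897, -342, -115, 648, 91, 19, -135, -226, 431, 2310],
     [621, -246, -313, 848, -745, -284, -95, 538, 75, 16, -112, -188, 358, 1917],
     [281, -114, -137, 386, -338, -124, -48, 237, 38, 6, -42, -78, 163, 877],
     [125, -52, -58, 173, -151, -53, -24, 101, 19, 2, -14, -31, 73, 395],
     [46, -19, -22, 64, -57, -20, -8, 39, 7, 1, -7, -13, 27, 145],
     [440, -173, -224, 600, -528, -202, -66, 384, 52, 12, -83, -136, 253, 1355],
     [-16, 7, 7, -21, 18, 8, 2, -13, 0, 0, 3, 4, -9, -49],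
     [-6, 3, 2, -7, 5, 3, 0, -3, 1, 1, 1, 0, -3, -15],
     [47, -17, -27, 62, -56, -25, -2, 46, 2, 2, -16, -20, 26, 137],
     [28, -9, -18, 38, -35, -15, -2, 30, 2, 2, -11, -14, 16, 82],
     [-499, 195, 256, -674, 593, 234, 69, -439, -51, -14, 103, 159, -285, -1519],
     [-89, 34, 47, -121, 107, 42, 12, -80, -10, -3, 19, 30, -51, -272]]"

definition B_rows :: "int list list" where
  "B_rows =
    [[-1, 0, 1, -3, 2, 2, 1, -1, 0, 0, 1, 1, -1, -5],
     [-7, 2, 5, -9, 6, 5, 0, -7, 1, 0, 2, 2, -4, -20],
     [-1, 1, 0, -2, 3, -2, 1, -1, 0, 0, -1, -1, -1, -5],
     [3, -1, -2, 4, -2, -2, -2, 3, 0, 0, 0, 0, 2, 10],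
     [-1, 1, -1, 1, 0, 0, -1, 0, 0, 0, 0, 0, 0, 0],
     [3, -1, -2, 5, -3, -2, 0, 2, -1, 0, 0, 0, 2, 10],
     [6, -3, -3, 9, -9, -4, 1, 7, -1, 0, -3, -3, 4, 19],
     [4, -2, -2, 5, -5, -1, 0, 4, 0, 0, -1, -1, 2, 12],
     [4, -2, -1, 5, -5, -1, -1, 2, 0, 0, -1, -1, 2, 10],
     [4, -1, -2, 4, -3, -3, 0, 3, 0, 0, -1, -2, 2, 9],
     [0, 1, -1, 0, 0, -1, 0, 1, 0, 0, -1, -1, 0, 0],
     [-2, 2, 0, -2, 3, 0, -1, -2, -1, 0, 0, 1, -1, -5],
     [15, -6, -7, 20, -16, -7, -3, 12, 0, 0, -1, -2, 9, 48],
     [-6, 2, 3, -7, 4, 3, 3, -4, -1, -1, -1, 1, -3, -19]]"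

definition B_inv_rows :: "int list list" where
  "B_inv_rows =
    [[-67, -41, -40, -26, -29, -27, -20, 11, -25, 15, -41, 6, -9, 0],
     [-102, -63, -61, -41, -43, -43, -30, 16, -39, 23, -64, 10, -13, 0],
     [-148, -91, -88, -59, -62, -63, -43, 24, -57, 34, -95, 15, -19, 0],
     [-123, -76, -73, -49, -51, -52, -36, 20, -47, 28, -79, 12, -16, 0],
     [-52, -34, -31, -23, -20, -26, -15, 8, -21, 13, -38, 7, -6, 0],
     [-21, -15, -13, -11, -7, -13, -6, 3, -9, 6, -18, 4, -2, 0],
     [-10, -7, -6, -5, -4, -5, -3, 1, -4, 2, -7, 1, -1, 0],
     [-89, -54, -53, -34, -38, -36, -26, 15, -34, 20, -55, 8, -12, 0],
     [-2, -2, -1, -1, -1, -1, -1, -1, 0, -1, 0, -1, 0, 0],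
     [-4, -4, -3, -2, -3, -1, -1, -2, 0, -2, 0, -1, -1, -1],
     [-10, -4, -6, -2, -5, -1, -3, 3, -4, 3, -4, 0, -2, 0],
     [-12, -7, -7, -3, -7, -2, -4, 1, -3, 0, -3, -1, -2, 0],
     [98, 56, 57, 35, 43, 35, 29, -20, 37, -22, 57, -8, 14, 0],
     [20, 12, 12, 7, 9, 7, 6, -3, 7, -4, 11, -1, 3, 0]]"

definition K3_rows :: "int list list" where
  "K3_rows = rows_of 22 22 k3_entry"

definition C_rows :: "int list list" where
  "C_rows = rows_of 14 14
     (\<lambda>i j. if i = Suc j then 1 else if j = 13 then - nth_default 0 phi14_coeffs i else 0)"

definition F_rows :: "int list list" where
  "F_rows = one_block_rows 8 F14_rows"

definition P_rows :: "int list list" where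
  "P_rows = rows_of 22 14 (\<lambda>i j. if i < 8 then 0 else B_inv_rows ! (i - 8) ! j)"

text \<open>
  Interval arithmetic applied to \<sigma> = P w directly loses all precision to cancellation, so the
  form is evaluated on w against the pulled-back Gram matrix G = P^T K P instead.
\<close>

definition G_rows :: "int list list" where
  "G_rows = rows_mult (List.transpose P_rows) (rows_mult K3_rows P_rows)"

definition eigvec_rows :: "int list list" where
  "eigvec_rows = rows_of 14 14 (\<lambda>i k. nth_default 0 phi14_coeffs (i + 1 + k))"

definition delta_box :: "ivl \<times> ivl" where
  "delta_box = ((-990400, -990397), (-138241, -138238))"

lemma certificate_shapes:
  "rows_shape 14 14 F14_rows" "rows_shape 14 14 F14_inv_rows"
  "rows_shape 14 14 B_rows" "rows_shape 14 14 B_inv_rows"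
  unfolding rows_shape_def by code_simp+

lemma F14_rows_inverse:
  "rows_mult F14_rows F14_inv_rows = one_rows 14" "rows_mult F14_inv_rows F14_rows = one_rows 14"
  by code_simp+

lemma F14_rows_conj_C_rows:
  "F14_rows = rows_mult (rows_mult B_inv_rows C_rows) B_rows"
  "rows_mult B_inv_rows B_rows = one_rows 14" "rows_mult B_rows B_inv_rows = one_rows 14"
  by code_simp+

lemma F_rows_preserves_K3_rows:
  "rows_mult (rows_mult (List.transpose F_rows) K3_rows) F_rows = K3_rows"
  by code_simp

lemma F_rows_intertwines_C_rows: "rows_mult F_rows P_rows = rows_mult P_rows C_rows"
  by code_simp

lemma G_rows_form_enclosure_pos:
  "0 < fst (ivl_hermitian_form (10^6) G_rows
     (civl_mat_vec eigvec_rows (civl_powers (10^6) delta_box ((10^6, 10^6), (0, 0)) 14)))"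
  by code_simp

lemma derived_shapes:
  "rows_shape 22 22 K3_rows" "rows_shape 14 14 C_rows" "rows_shape 22 22 F_rows"
  "rows_shape 22 14 P_rows" "rows_shape 14 22 (List.transpose P_rows)"
  "rows_shape 22 14 (rows_mult K3_rows P_rows)" "rows_shape 14 14 G_rows"
  "rows_shape 14 14 eigvec_rows"
proof -
  show K: "rows_shape 22 22 K3_rows" and "rows_shape 14 14 C_rows" and P: "rows_shape 22 14 P_rows"
    and "rows_shape 14 14 eigvec_rows"
    by (simp_all add: K3_rows_def C_rows_def P_rows_def eigvec_rows_def rows_shape_rows_of)
  show "rows_shape 22 22 F_rows"
    by (simp add: F_rows_def one_block_rows_def rows_shape_rows_of
        certificate_shapes(1)[unfolded rows_shape_def])
  show Pt: "rows_shape 14 22 (List.transpose P_rows)" by (rule rows_shape_transpose[OF P]) simp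
  show KP: "rows_shape 22 14 (rows_mult K3_rows P_rows)" by (rule rows_shape_mult[OF K P]) simp
  show "rows_shape 14 14 G_rows" unfolding G_rows_def by (rule rows_shape_mult[OF Pt KP]) simp
qed

lemma K3_gram_eq: "K3_gram = mat_of_rows_list 22 K3_rows"
  by (simp add: K3_gram_def K3_rows_def mat_of_rows_list_rows_of)

lemma K3_gram_carrier: "K3_gram \<in> carrier_mat 22 22"
  by (simp add: K3_gram_def)

lemma C_rows_eq: "mat_of_rows_list 14 C_rows = companion_mat phi14"
  by (auto simp: C_rows_def mat_of_rows_list_rows_of companion_mat_def degree_phi14 coeff_phi14)

lemma G_rows_eq:
  "mat_of_rows_list 14 G_rows =
    transpose_mat (mat_of_rows_list 14 P_rows) * K3_gram * mat_of_rows_list 14 P_rows"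
  using mat_of_rows_list_carrier[OF derived_shapes(4)]
    mat_of_rows_list_carrier[OF derived_shapes(1)] mat_of_rows_list_carrier[OF derived_shapes(5)]
  by (simp add: G_rows_def K3_gram_eq transpose_mat_of_rows_list[OF derived_shapes(4)]
      mat_of_rows_list_mult[OF derived_shapes(5,6)] mat_of_rows_list_mult[OF derived_shapes(1,4)]
      assoc_mult_mat[of _ 14 22 _ 22 _ 14])

definition K3_F :: "int mat" where
  "K3_F = mat_of_rows_list 22 F_rows"

lemma K3_F_eq: "K3_F = four_block_mat (1\<^sub>m 8) (0\<^sub>m 8 14) (0\<^sub>m 14 8) (mat_of_rows_list 14 F14_rows)"
  using mat_of_rows_list_one_block_rows[OF certificate_shapes(1), of 8]
  by (simp add: K3_F_def F_rows_def)

lemma K3_F_carrier: "K3_F \<in> carrier_mat 22 22"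
  by (simp add: K3_F_def mat_of_rows_list_carrier[OF derived_shapes(3)])

lemma K3_aut_K3_F: "K3_aut K3_F"
proof -
  note F = derived_shapes(3) and K = derived_shapes(1)
  have Ft: "rows_shape 22 22 (List.transpose F_rows)" by (rule rows_shape_transpose[OF F]) simp
  have "invertible_mat K3_F"
    unfolding K3_F_eq
    by (rule invertible_four_block_one[of _ 14 "mat_of_rows_list 14 F14_inv_rows"])
      (simp_all add: mat_of_rows_list_carrier certificate_shapes F14_rows_inverse
        mat_of_rows_list_one_rows mat_of_rows_list_mult[OF certificate_shapes(1,2)]
        mat_of_rows_list_mult[OF certificate_shapes(2,1)])
  moreover have "transpose_mat K3_F * K3_gram * K3_F = K3_gram"
    unfolding K3_F_def K3_gram_eq transpose_mat_of_rows_list[OF F zero_less_numeral]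
    by (simp add: mat_of_rows_list_mult[OF Ft K]
        mat_of_rows_list_mult[OF rows_shape_mult[OF Ft K] F] F_rows_preserves_K3_rows)
  ultimately show ?thesis using K3_F_carrier by (simp add: K3_aut_def)
qed

lemma F14_similar_companion: "similar_mat (mat_of_rows_list 14 F14_rows) (companion_mat phi14)"
proof -
  note C = derived_shapes(2) and B = certificate_shapes(3) and B' = certificate_shapes(4)
  have B'C: "rows_shape 14 14 (rows_mult B_inv_rows C_rows)" by (rule rows_shape_mult[OF B' C]) simp
  have "similar_mat_wit (mat_of_rows_list 14 F14_rows) (mat_of_rows_list 14 C_rows)
      (mat_of_rows_list 14 B_inv_rows) (mat_of_rows_list 14 B_rows)"
    using mat_of_rows_list_carrier[OF certificate_shapes(1)] mat_of_rows_list_carrier[OF B]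
      mat_of_rows_list_carrier[OF B'] mat_of_rows_list_carrier[OF C]
    unfolding similar_mat_wit_def Let_def
    by (simp add: mat_of_rows_list_one_rows F14_rows_conj_C_rows(2,3)
        mat_of_rows_list_mult[OF B' C] mat_of_rows_list_mult[OF B'C B]
        mat_of_rows_list_mult[OF B' B] mat_of_rows_list_mult[OF B B']
        F14_rows_conj_C_rows(1)[symmetric])
  then show ?thesis unfolding similar_mat_def C_rows_eq by blast
qed

lemma char_poly_K3_F: "char_poly K3_F = [:-1, 1:] ^ 8 * phi14"
proof -
  have "char_poly K3_F = char_poly (1\<^sub>m 8 :: int mat) * char_poly (mat_of_rows_list 14 F14_rows)"
    unfolding K3_F_eq
    by (rule char_poly_four_block_diag) (simp_all add: mat_of_rows_list_carrier certificate_shapes)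
  also have "char_poly (mat_of_rows_list 14 F14_rows) = phi14"
    using char_poly_similar[OF F14_similar_companion] char_poly_companion_mat[OF monic_phi14]
    by (simp add: degree_phi14)
  finally show ?thesis by (simp add: char_poly_one_mat)
qed

definition K3_period :: "complex \<Rightarrow> complex vec" where
  "K3_period d =
    map_mat of_int (mat_of_rows_list 14 P_rows) *\<^sub>v companion_eigvec (map_poly of_int phi14) d"

lemma companion_eigvec_phi14_carrier:
  "companion_eigvec (map_poly of_int phi14) (d :: complex) \<in> carrier_vec 14"
  by (simp add: companion_eigvec_def degree_phi14)

lemma K3_period_carrier: "K3_period d \<in> carrier_vec 22"
  using mat_of_rows_list_carrier[OF derived_shapes(4)] companion_eigvec_phi14_carrier
  by (simp add: K3_period_def)

lemma K3_F_K3_period: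
  assumes "poly (map_poly of_int phi14) d = 0"
  shows "map_mat of_int K3_F *\<^sub>v K3_period d = d \<cdot>\<^sub>v K3_period d"
proof -
  let ?f = "map_poly (of_int :: int \<Rightarrow> complex) phi14" and ?P = "mat_of_rows_list 14 P_rows"
  have P: "?P \<in> carrier_mat 22 14" by (rule mat_of_rows_list_carrier[OF derived_shapes(4)])
  have C: "companion_mat phi14 \<in> carrier_mat 14 14" by (simp add: companion_mat_def degree_phi14)
  have "K3_F * ?P = ?P * companion_mat phi14"
    unfolding K3_F_def C_rows_eq[symmetric]
    by (simp add: mat_of_rows_list_mult[OF derived_shapes(3,4)]
        mat_of_rows_list_mult[OF derived_shapes(4,2)] F_rows_intertwines_C_rows)
  then have
    "map_mat of_int (K3_F * ?P) = map_mat (of_int :: int \<Rightarrow> complex) (?P * companion_mat phi14)"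
    by simp
  then have FP: "map_mat of_int K3_F * map_mat of_int ?P = map_mat of_int ?P * companion_mat ?f"
    by (simp add: of_int_hom.mat_hom_mult[OF K3_F_carrier P] of_int_hom.mat_hom_mult[OF P C]
        companion_mat_map_of_int)
  show ?thesis unfolding K3_period_def
    using K3_F_carrier P companion_eigvec_phi14_carrier
    by (intro intertwined_eigvec[OF _ _ _ _ FP companion_mat_eigvec[OF monic_of_int_phi14 assms]])
      (auto simp: companion_mat_def degree_phi14)
qed

lemma K3_period_isotropic:
  assumes "poly (map_poly of_int phi14) d = 0" and "d\<^sup>2 \<noteq> 1"
  shows "K3_formC (K3_period d) (K3_period d) = 0"
proof -
  have "map_mat (of_int :: int \<Rightarrow> complex) (transpose_mat K3_F * K3_gram * K3_F) =
      map_mat of_int K3_gram"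
    using K3_aut_K3_F by (simp add: K3_aut_def)
  then have "transpose_mat (map_mat of_int K3_F) * map_mat of_int K3_gram * map_mat of_int K3_F =
      map_mat (of_int :: int \<Rightarrow> complex) K3_gram"
    using K3_F_carrier K3_gram_carrier
    by (simp add: of_int_hom.mat_hom_mult[of _ 22 22 _ 22] map_mat_transpose)
  then show ?thesis
    unfolding K3_formC_def
    using K3_F_carrier K3_gram_carrier K3_period_carrier K3_F_K3_period[OF assms(1)] assms(2)
    by (intro eigvec_isotropic[of _ 22]) auto
qed

lemma e8m_entry_sym: "e8m_entry i j = e8m_entry j i"
  unfolding e8m_entry_def e8_adj_def by auto

lemma k3_entry_sym: "k3_entry i j = k3_entry j i"
  unfolding k3_entry_def by (simp add: e8m_entry_sym)

lemma K3_period_hermitian_real: "K3_formC (K3_period d) (map_vec cnj (K3_period d)) \<in> \<real>"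
proof -
  have "Im (K3_formC (K3_period d) (map_vec cnj (K3_period d))) = 0"
    unfolding K3_formC_def
    by (rule Im_hermitian_form[OF K3_period_carrier K3_gram_carrier])
      (simp add: K3_gram_def k3_entry_sym)
  then show ?thesis by (simp add: complex_is_Real_iff)
qed

lemma K3_period_hermitian_eq:
  "K3_formC (K3_period d) (map_vec cnj (K3_period d)) =
    companion_eigvec (map_poly of_int phi14) d \<bullet>
      (map_mat of_int (mat_of_rows_list 14 G_rows) *\<^sub>v
        map_vec cnj (companion_eigvec (map_poly of_int phi14) d))"
  unfolding K3_formC_def K3_period_def G_rows_eq
  by (rule hermitian_form_pullback[OF mat_of_rows_list_carrier[OF derived_shapes(4)] K3_gram_carrier
        companion_eigvec_phi14_carrier])

lemma in_civl_delta_box: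
  assumes "cmod (d - Complex (-0.9903988352300419) (-0.13823945592693967)) < 1 / 10^6"
  shows "in_civl (10^6) d delta_box"
  using assms abs_Re_le_cmod[of "d - Complex (-0.9903988352300419) (-0.13823945592693967)"]
    abs_Im_le_cmod[of "d - Complex (-0.9903988352300419) (-0.13823945592693967)"]
  by (auto simp: delta_box_def in_civl_def in_ivl_def abs_le_iff)

lemma delta_box_sq_ne_one:
  assumes "in_civl (10^6) d delta_box"
  shows "d\<^sup>2 \<noteq> 1"
proof
  assume "d\<^sup>2 = 1"
  then have "d = 1 \<or> d = -1" by (simp add: power2_eq_1_iff)
  then show False using assms by (auto simp: delta_box_def in_civl_def in_ivl_def)
qed

lemma K3_period_hermitian_pos:
  assumes d: "in_civl (10^6) d delta_box"
  shows "0 < Re (K3_formC (K3_period d) (map_vec cnj (K3_period d)))"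
proof -
  let ?w = "companion_eigvec (map_poly of_int phi14) d"
    and ?Ws = "civl_mat_vec eigvec_rows (civl_powers (10^6) delta_box ((10^6, 10^6), (0, 0)) 14)"
  have "?w = map_mat of_int (mat_of_rows_list 14 eigvec_rows) *\<^sub>v vec 14 (\<lambda>k. d ^ k)"
    by (simp add: companion_eigvec_map_of_int degree_phi14 eigvec_rows_def coeff_phi14)
  then have w: "in_civl_vec (10^6) ?w ?Ws"
    using in_civl_vec_mat_vec[OF derived_shapes(8) in_civl_vec_powers[OF _ d], of 14] by simp
  have "in_ivl (10^6) (Re (?w \<bullet> (map_mat of_int (mat_of_rows_list 14 G_rows) *\<^sub>v map_vec cnj ?w)))
      (ivl_hermitian_form (10^6) G_rows ?Ws)"
    by (rule in_ivl_hermitian_form[OF _ derived_shapes(7) w])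
      (simp_all add: civl_mat_vec_def eigvec_rows_def rows_of_def)
  from in_ivl_pos[OF _ this G_rows_form_enclosure_pos] show ?thesis
    by (simp add: K3_period_hermitian_eq)
qed

theorem proposition3p1:
  fixes \<delta> :: complex
  assumes "poly (map_poly of_int phi14) \<delta> = 0"
    and "cmod (\<delta> - Complex (-0.9903988352300419) (-0.13823945592693967)) < 1 / 10^6"
  shows "\<exists>F :: int mat. \<exists>\<sigma> :: complex vec.
           K3_aut F \<and>
           char_poly F = [:-1, 1:] ^ 8 * phi14 \<and>
           \<sigma> \<in> carrier_vec 22 \<and>
           K3_formC \<sigma> \<sigma> = 0 \<and>
           K3_formC \<sigma> (map_vec cnj \<sigma>) \<in> \<real> \<and> Re (K3_formC \<sigma> (map_vec cnj \<sigma>)) > 0 \<and>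
           map_mat of_int F *\<^sub>v \<sigma> = \<delta> \<cdot>\<^sub>v \<sigma>"
proof (intro exI conjI)
  have box: "in_civl (10^6) \<delta> delta_box" by (rule in_civl_delta_box[OF assms(2)])
  show "K3_aut K3_F" by (rule K3_aut_K3_F)
  show "char_poly K3_F = [:-1, 1:] ^ 8 * phi14" by (rule char_poly_K3_F)
  show "K3_period \<delta> \<in> carrier_vec 22" by (rule K3_period_carrier)
  show "K3_formC (K3_period \<delta>) (K3_period \<delta>) = 0"
    by (rule K3_period_isotropic[OF assms(1) delta_box_sq_ne_one[OF box]])
  show "K3_formC (K3_period \<delta>) (map_vec cnj (K3_period \<delta>)) \<in> \<real>"
    by (rule K3_period_hermitian_real)
  show "Re (K3_formC (K3_period \<delta>) (map_vec cnj (K3_period \<delta>))) > 0"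
    by (rule K3_period_hermitian_pos[OF box])
  show "map_mat of_int K3_F *\<^sub>v K3_period \<delta> = \<delta> \<cdot>\<^sub>v K3_period \<delta>"
    by (rule K3_F_K3_period[OF assms(1)])
qed

end
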